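(* Assume the standing setup with (C1)–(C3), $1\le i\le n-1$, $\xi\in V_{\mathbb C}(\mathcal I_i)$, $\eta_i$, $\xi_{i+1,j}$ and $\theta_j$ ($j=1,\dots,m$) as in the context. Let $I_i=\langle[a,b],[c,d]\rangle$ be a complex interval containing $\eta_i$, and for $j=1,\dots,m$ let $K_j=\langle[p_j,q_j],[g_j,h_j]\rangle$ be pairwise disjoint complex intervals with $\theta_j\in K_j$. Define $J_{i+1,j}=\frac{K_j-I_i}{s_1\cdots s_i}=\frac{\langle[p_j-b,\,q_j-a],\,[g_j-d,\,h_j-c]\rangle}{s_1\cdots s_i}$. Suppose that for all $j$ $(q_j-p_j)+(b-a)<s_1\cdots s_i\,\epsilon$ and $(h_j-g_j)+(d-c)<s_1\cdots s_i\,\epsilon$, and that $S_{\eta_i}:=\min_{1\le k\ne j\le m}\mathrm{Dis}(K_k,K_j)>\max\{b-a,d-c\}$. Then $\xi_{i+1,j}\in J_{i+1,j}$ for every $j$, each $J_{i+1,j}$ has length less than $\epsilon$, and the $J_{i+1,j}$, $j=1,\dots,m$, are pairwise disjoint.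
   Context: Standing setup. $\mathcal P\subset\mathbb Q[x_1,\dots,x_n]$ zero-dimensional; $\mathcal I_i=(\mathcal P)\cap\mathbb Q[x_1,\dots,x_i]$ with complex zero set $V_{\mathbb C}(\mathcal I_i)$. For $c=u+v\mathrm{i}$, $|c|=\max\{|u|,|v|\}$. Positive rationals $d_i,r_i,s_i$ satisfy (C1) $d_i<\min\{D_i,d_{i-1}/(2s_{i-1})\}$ where $D_i=\min\{\tfrac12|\alpha-\beta| : \eta\in V_{\mathbb C}(\mathcal I_{i-1}),(\eta,\alpha),(\eta,\beta)\in V_{\mathbb C}(\mathcal I_i),\alpha\ne\beta\}$ ($+\infty$ if empty), $s_0=1,d_0=+\infty$; (C2) $r_i>2\max\{|\alpha_i| : (\alpha_1,\dots,\alpha_i)\in V_{\mathbb C}(\mathcal I_i)\}$; (C3) $s_i\le d_i/r_{i+1}$. For $\xi=(\xi_1,\dots,\xi_i)\in V_{\mathbb C}(\mathcal I_i)$: $\eta_i=\xi_1+s_1\xi_2+\cdots+s_1\cdots s_{i-1}\xi_i$; $(\xi,\xi_{i+1,j})$, $j=1,\dots,m$, are all points of $V_{\mathbb C}(\mathcal I_{i+1})$ over $\xi$; $\theta_j=\eta_i+s_1\cdots s_i\xi_{i+1,j}$. A complex interval $\langle[a,b],[c,d]\rangle$ ($a\le b$, $c\le d$ rational) is the closed rectangle $\{u+v\mathrm i: u\in[a,b],v\in[c,d]\}$, of length $\max\{b-a,d-c\}$; dividing by a positive number divides all endpoints. For real intervals with $a_1\le a_2$: $\mathrm{Dis}([a_1,b_1],[a_2,b_2])=a_2-b_1$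 if disjoint, else $0$; for complex intervals $\mathrm{Dis}(\langle I_1,J_1\rangle,\langle I_2,J_2\rangle)=\max\{\mathrm{Dis}(I_1,I_2),\mathrm{Dis}(J_1,J_2)\}$. *)

theory Defs
  imports Complex_Main "HOL-Library.Poly_Mapping" "HOL-Library.Extended_Real"
begin

section \<open>Multivariate rational polynomials (variable x_(k+1) is index k)\<close>

type_synonym mpoly = "(nat \<Rightarrow>\<^sub>0 nat) \<Rightarrow>\<^sub>0 rat"

definition mpoly_eval :: "mpoly \<Rightarrow> complex list \<Rightarrow> complex" where
  "mpoly_eval p xs = (\<Sum>mon\<in>Poly_Mapping.keys p. of_rat (Poly_Mapping.lookup p mon) * (\<Prod>v\<in>Poly_Mapping.keys mon. (xs ! v) ^ (Poly_Mapping.lookup mon v)))"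

definition in_vars :: "nat \<Rightarrow> mpoly \<Rightarrow> bool" where
  "in_vars i p \<longleftrightarrow> (\<forall>m\<in>Poly_Mapping.keys p. \<forall>v\<in>Poly_Mapping.keys m. v < i)"

definition ideal_gen :: "mpoly set \<Rightarrow> mpoly set" where
  "ideal_gen P = {q. \<exists>S c. finite S \<and> S \<subseteq> P \<and> q = (\<Sum>p\<in>S. c p * p)}"

definition elim_ideal :: "mpoly set \<Rightarrow> nat \<Rightarrow> mpoly set" where
  "elim_ideal P i = ideal_gen P \<inter> {p. in_vars i p}"

definition zeroset :: "nat \<Rightarrow> mpoly set \<Rightarrow> complex list set" where
  "zeroset i F = {xs. length xs = i \<and> (\<forall>p\<in>F. mpoly_eval p xs = 0)}"

abbreviation VC :: "mpoly set \<Rightarrow> nat \<Rightarrow> complex list set" where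
  "VC P i \<equiv> zeroset i (elim_ideal P i)"

definition cnorm :: "complex \<Rightarrow> real" where
  "cnorm z = max \<bar>Re z\<bar> \<bar>Im z\<bar>"

definition Dset :: "mpoly set \<Rightarrow> nat \<Rightarrow> real set" where
  "Dset P i = {cnorm (\<alpha> - \<beta>) / 2 | \<eta> \<alpha> \<beta>. \<eta> \<in> VC P (i - 1) \<and>
      \<eta> @ [\<alpha>] \<in> VC P i \<and> \<eta> @ [\<beta>] \<in> VC P i \<and> \<alpha> \<noteq> \<beta>}"

text \<open>D_i (= +infinity if the set is empty)\<close>
definition Dval :: "mpoly set \<Rightarrow> nat \<Rightarrow> ereal" where
  "Dval P i = Inf (ereal ` Dset P i)"

text \<open>(C1), with s_0 = 1 and d_0 = +infinity, for i = 1..n\<close>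
definition C1 :: "mpoly set \<Rightarrow> nat \<Rightarrow> (nat \<Rightarrow> rat) \<Rightarrow> (nat \<Rightarrow> rat) \<Rightarrow> bool" where
  "C1 P n d s \<longleftrightarrow> (\<forall>i\<in>{1..n}. ereal (of_rat (d i)) < Dval P i \<and>
      (i \<ge> 2 \<longrightarrow> d i < d (i - 1) / (2 * s (i - 1))))"

definition C2 :: "mpoly set \<Rightarrow> nat \<Rightarrow> (nat \<Rightarrow> rat) \<Rightarrow> bool" where
  "C2 P n r \<longleftrightarrow> (\<forall>i\<in>{1..n}. \<forall>xs\<in>VC P i. 2 * cnorm (xs ! (i - 1)) < of_rat (r i))"

definition C3 :: "nat \<Rightarrow> (nat \<Rightarrow> rat) \<Rightarrow> (nat \<Rightarrow> rat) \<Rightarrow> (nat \<Rightarrow> rat) \<Rightarrow> bool" where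
  "C3 n d r s \<longleftrightarrow> (\<forall>i\<in>{1..n-1}. s i \<le> d i / r (i + 1))"

definition sprod :: "(nat \<Rightarrow> rat) \<Rightarrow> nat \<Rightarrow> rat" where
  "sprod s k = (\<Prod>l\<in>{1..k}. s l)"

definition eta :: "(nat \<Rightarrow> rat) \<Rightarrow> complex list \<Rightarrow> nat \<Rightarrow> complex" where
  "eta s xi i = (\<Sum>k\<in>{1..i}. of_rat (sprod s (k - 1)) * xi ! (k - 1))"

type_synonym cinterval = "(rat \<times> rat) \<times> (rat \<times> rat)"

definition cset :: "cinterval \<Rightarrow> complex set" where
  "cset I = (case I of ((a, b), (c, d)) \<Rightarrow>
     {z. of_rat a \<le> Re z \<and> Re z \<le> of_rat b \<and> of_rat c \<le> Im z \<and> Im z \<le> of_rat d})"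

definition clen :: "cinterval \<Rightarrow> rat" where
  "clen I = (case I of ((a, b), (c, d)) \<Rightarrow> max (b - a) (d - c))"

definition cdivide :: "cinterval \<Rightarrow> rat \<Rightarrow> cinterval" where
  "cdivide I t = (case I of ((a, b), (c, d)) \<Rightarrow> ((a / t, b / t), (c / t, d / t)))"

definition rDis :: "rat \<times> rat \<Rightarrow> rat \<times> rat \<Rightarrow> rat" where
  "rDis I1 I2 = (case I1 of (a1, b1) \<Rightarrow> case I2 of (a2, b2) \<Rightarrow>
     (if a1 \<le> a2 then (if b1 < a2 then a2 - b1 else 0)
      else (if b2 < a1 then a1 - b2 else 0)))"

definition cDis :: "cinterval \<Rightarrow> cinterval \<Rightarrow> rat" where
  "cDis K1 K2 = max (rDis (fst K1) (fst K2)) (rDis (snd K1) (snd K2))"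

end

theory Submission
  imports Defs
begin

text \<open>
  The theorem is a statement about complex interval arithmetic; the algebraic hypotheses
  (C1)--(C3), zero-dimensionality etc. only guarantee that the configuration exists.
  Write \<open>K \<ominus> I\<close> for the Minkowski difference of two complex intervals,
  \<open>\<langle>[p-b, q-a], [g-d, h-c]\<rangle>\<close> for \<open>K = \<langle>[p,q],[g,h]\<rangle>\<close> and \<open>I = \<langle>[a,b],[c,d]\<rangle>\<close>, and
  \<open>S = s\<^sub>1\<cdots>s\<^sub>i > 0\<close>.  The three claims then follow from general facts:
  (1) \<open>\<theta> \<in> K\<close> and \<open>\<eta> \<in> I\<close> give \<open>\<theta> - \<eta> \<in> K \<ominus> I\<close>, and \<open>z \<in> J/S\<close> iff \<open>S z \<in> J\<close>;
      with \<open>\<theta>\<^sub>j - \<eta>\<^sub>i = S \<xi>\<^sub>i\<^sub>+\<^sub>1\<^sub>,\<^sub>j\<close> this gives \<open>\<xi>\<^sub>i\<^sub>+\<^sub>1\<^sub>,\<^sub>j \<in> J\<^sub>i\<^sub>+\<^sub>1\<^sub>,\<^sub>j\<close>;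
  (2) the length of \<open>K \<ominus> I\<close> is the maximum of the summed side lengths, and dividing by
      \<open>S\<close> divides the length by \<open>S\<close>;
  (3) if \<open>K \<ominus> I\<close> and \<open>K' \<ominus> I\<close> meet, then \<open>Dis(K, K')\<close> is at most the length of \<open>I\<close>;
      dividing by \<open>S\<close> is a bijection and so preserves disjointness.
\<close>

text \<open>The Minkowski difference \<open>K \<ominus> I = {\<theta> - \<eta> | \<theta> \<in> K, \<eta> \<in> I}\<close> of complex intervals.\<close>
definition cminus :: "cinterval \<Rightarrow> cinterval \<Rightarrow> cinterval" where
  "cminus K I = (case K of ((p, q), (g, h)) \<Rightarrow> case I of ((a, b), (c, d)) \<Rightarrow>
     ((p - b, q - a), (g - d, h - c)))"

lemma complex_of_rat_eq_of_real: "(of_rat x :: complex) = of_real (of_rat x)"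
  by (cases x) (simp add: of_rat_rat)

lemma mem_cset_cdivide:
  assumes "t > 0"
  shows "z \<in> cset (cdivide J t) \<longleftrightarrow> of_rat t * z \<in> cset J"
proof -
  have t: "(of_rat t :: real) > 0" using assms by simp
  obtain a b c d where J: "J = ((a, b), (c, d))" by (metis prod.collapse)
  show ?thesis using t unfolding J cdivide_def cset_def
    by (simp add: complex_of_rat_eq_of_real of_rat_divide pos_divide_le_eq pos_le_divide_eq
                  mult.commute)
qed

text \<open>Division by a positive number is injective, hence preserves disjointness.\<close>
lemma cdivide_disjoint_iff:
  assumes "t > 0"
  shows "cset (cdivide A t) \<inter> cset (cdivide B t) = {} \<longleftrightarrow> cset A \<inter> cset B = {}"
proof -
  have inv: "of_rat t * (w / of_rat t) = w" for w :: complex using assms by simp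
  show ?thesis
    unfolding mem_cset_cdivide[OF assms] set_eq_iff Int_iff empty_iff
    using inv by metis
qed

lemma clen_cdivide: "t > 0 \<Longrightarrow> clen (cdivide J t) = clen J / t"
  by (cases J) (auto simp: clen_def cdivide_def diff_divide_distrib[symmetric]
                           max_divide_distrib_right)

lemma diff_mem_cminus:
  assumes "\<theta> \<in> cset K" and "\<eta> \<in> cset I"
  shows "\<theta> - \<eta> \<in> cset (cminus K I)"
proof -
  obtain p q g h where K: "K = ((p, q), (g, h))" by (metis prod.collapse)
  obtain a b c d where I: "I = ((a, b), (c, d))" by (metis prod.collapse)
  show ?thesis using assms unfolding K I cset_def cminus_def by (auto simp: of_rat_diff)
qed

lemma clen_cminus:
  "clen (cminus ((p, q), (g, h)) ((a, b), (c, d))) = max ((q - p) + (b - a)) ((h - g) + (d - c))"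
  by (simp add: clen_def cminus_def algebra_simps)

text \<open>One-dimensional core of the separation argument: if the real intervals
  \<open>[p,q] - [a,b]\<close> and \<open>[p',q'] - [a,b]\<close> overlap, the gap between \<open>[p,q]\<close> and \<open>[p',q']\<close>
  is at most \<open>b - a\<close>.\<close>
lemma rDis_le_of_overlap:
  assumes "a \<le> b" and "p' - b \<le> q - a" and "p - b \<le> q' - a"
  shows "rDis (p, q) (p', q') \<le> b - a"
  using assms unfolding rDis_def by auto

lemma cminus_disjoint:
  assumes I_ord: "a \<le> b" "c \<le> d"
    and sep: "cDis K K' > clen ((a, b), (c, d))"
  shows "cset (cminus K ((a, b), (c, d))) \<inter> cset (cminus K' ((a, b), (c, d))) = {}"
proof (rule ccontr)
  obtain p q g h where K: "K = ((p, q), (g, h))" by (metis prod.collapse)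
  obtain p' q' g' h' where K': "K' = ((p', q'), (g', h'))" by (metis prod.collapse)
  assume "\<not> ?thesis"
  then obtain z where "z \<in> cset (cminus K ((a, b), (c, d)))" "z \<in> cset (cminus K' ((a, b), (c, d)))"
    by blast
  then have "of_rat (p' - b) \<le> (of_rat (q - a) :: real)" "of_rat (p - b) \<le> (of_rat (q' - a) :: real)"
    "of_rat (g' - d) \<le> (of_rat (h - c) :: real)" "of_rat (g - d) \<le> (of_rat (h' - c) :: real)"
    unfolding K K' cminus_def cset_def by auto
  then have "rDis (p, q) (p', q') \<le> b - a" "rDis (g, h) (g', h') \<le> d - c"
    using I_ord by (auto simp: of_rat_less_eq intro: rDis_le_of_overlap)
  then have "cDis K K' \<le> clen ((a, b), (c, d))"
    unfolding K K' cDis_def clen_def by auto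
  with sep show False by simp
qed

lemma sprod_pos: "\<forall>k\<in>{1..i}. s k > 0 \<Longrightarrow> sprod s i > 0"
  unfolding sprod_def by (rule prod_pos) auto

theorem mainTheorem10:
  fixes P :: "mpoly set" and n i m :: nat
    and d r s :: "nat \<Rightarrow> rat"
    and xi :: "complex list" and xnext :: "nat \<Rightarrow> complex"
    and a b c e :: rat and p q g h :: "nat \<Rightarrow> rat" and \<epsilon> :: real
  assumes P_vars: "\<forall>f\<in>P. in_vars n f"
    and zero_dim: "finite (VC P n)"
    and pos: "\<forall>k\<in>{1..n}. d k > 0 \<and> r k > 0 \<and> s k > 0"
    and C1: "C1 P n d s" and C2: "C2 P n r" and C3: "C3 n d r s"
    and i_range: "1 \<le> i" "i \<le> n - 1"
    and xi_in: "xi \<in> VC P i"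
    and fibre: "bij_betw xnext {1..m} {\<alpha>. xi @ [\<alpha>] \<in> VC P (i + 1)}"
    and I_ord: "a \<le> b" "c \<le> e"
    and eta_in: "eta s xi i \<in> cset ((a, b), (c, e))"
    and K_ord: "\<forall>j\<in>{1..m}. p j \<le> q j \<and> g j \<le> h j"
    and K_disj: "\<forall>j\<in>{1..m}. \<forall>k\<in>{1..m}. j \<noteq> k \<longrightarrow>
                   cset ((p j, q j), (g j, h j)) \<inter> cset ((p k, q k), (g k, h k)) = {}"
    and theta_in: "\<forall>j\<in>{1..m}. eta s xi i + of_rat (sprod s i) * xnext j \<in> cset ((p j, q j), (g j, h j))"
    and len1: "\<forall>j\<in>{1..m}. of_rat ((q j - p j) + (b - a)) < of_rat (sprod s i) * \<epsilon>"
    and len2: "\<forall>j\<in>{1..m}. of_rat ((h j - g j) + (e - c)) < of_rat (sprod s i) * \<epsilon>"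
    and sep: "\<forall>k\<in>{1..m}. \<forall>j\<in>{1..m}. k \<noteq> j \<longrightarrow>
                cDis ((p k, q k), (g k, h k)) ((p j, q j), (g j, h j)) > max (b - a) (e - c)"
  shows "(\<forall>j\<in>{1..m}. xnext j \<in> cset (cdivide ((p j - b, q j - a), (g j - e, h j - c)) (sprod s i)))
       \<and> (\<forall>j\<in>{1..m}. of_rat (clen (cdivide ((p j - b, q j - a), (g j - e, h j - c)) (sprod s i))) < \<epsilon>)
       \<and> (\<forall>j\<in>{1..m}. \<forall>k\<in>{1..m}. j \<noteq> k \<longrightarrow>
            cset (cdivide ((p j - b, q j - a), (g j - e, h j - c)) (sprod s i)) \<inter>
            cset (cdivide ((p k - b, q k - a), (g k - e, h k - c)) (sprod s i)) = {})"
proof -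
  define S where "S = sprod s i"
  define I where "I = ((a, b), (c, e))"
  define K where "K j = ((p j, q j), (g j, h j))" for j
  have S_pos: "S > 0" unfolding S_def using pos i_range by (intro sprod_pos) auto
  have J_eq: "((p j - b, q j - a), (g j - e, h j - c)) = cminus (K j) I" for j
    by (simp add: K_def I_def cminus_def)
  have contain: "xnext j \<in> cset (cdivide (cminus (K j) I) S)" if "j \<in> {1..m}" for j
  proof -
    have "of_rat S * xnext j \<in> cset (cminus (K j) I)"
      using diff_mem_cminus[OF theta_in[rule_format, OF that] eta_in]
      by (simp add: S_def K_def I_def)
    then show ?thesis by (simp add: mem_cset_cdivide[OF S_pos])
  qed
  have length: "of_rat (clen (cdivide (cminus (K j) I) S)) < \<epsilon>" if "j \<in> {1..m}" for j
    using len1[rule_format, OF that] len2[rule_format, OF that] S_pos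
    by (simp add: clen_cdivide K_def I_def clen_cminus S_def of_rat_divide
                  pos_divide_less_eq mult.commute)
  have disjoint: "cset (cdivide (cminus (K j) I) S) \<inter> cset (cdivide (cminus (K k) I) S) = {}"
    if "j \<in> {1..m}" "k \<in> {1..m}" "j \<noteq> k" for j k
    using cminus_disjoint[OF I_ord, of "K j" "K k"] sep that
    by (simp add: cdivide_disjoint_iff[OF S_pos] I_def K_def clen_def)
  show ?thesis using contain length disjoint unfolding J_eq S_def by blast
qed

end
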